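(* Let $(A,\circ,\cap,\sqcup)$ be a right normal band with intersection and override, and define $a\diamond b=a\circ(b\sqcup a)$. If $F$ is a filter of $(A,\circ)$ such that $a\sqcup b\in F$ implies $a\in F$ or $b\in F$ (a prime filter), then $F$ is weakly prime: whenever $a\in F$ and $b\in A$, either $b\in F$ or $a\cap(a\diamond b)\in F$.
   Context: A right normal band with intersection and override $(A,\circ,\cap,\sqcup)$: $(A,\circ)$ a semigroup with $x\circ x=x$, $(x\circ y)\circ z=(y\circ x)\circ z$; $(A,\cap)$ a semilattice; $(x\cap y)\circ x=x\cap y$; $x\circ(y\cap z)=(x\circ y)\cap z$; $s\circ(s\sqcup t)=s$; $((s\sqcup t)\cap t)\sqcup s=s\sqcup t$; $(s\sqcup t)\circ u=(s\circ u)\sqcup(t\circ u)$. Define $f\lesssim g$ iff $g\circ f=f$. A filter of $(A,\circ)$ is a non-empty $F\subseteq A$ closed under $\circ$ with $a\in F$, $a\lesssim b\Rightarrow b\in F$. *)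

theory Defs
  imports Main
begin

definition rnb_io :: "'a set \<Rightarrow> ('a \<Rightarrow> 'a \<Rightarrow> 'a) \<Rightarrow> ('a \<Rightarrow> 'a \<Rightarrow> 'a) \<Rightarrow> ('a \<Rightarrow> 'a \<Rightarrow> 'a) \<Rightarrow> bool" where
  "rnb_io A c i ov \<longleftrightarrow>
     (\<forall>x\<in>A. \<forall>y\<in>A. c x y \<in> A \<and> i x y \<in> A \<and> ov x y \<in> A) \<and>
     (\<forall>x\<in>A. \<forall>y\<in>A. \<forall>z\<in>A. c (c x y) z = c x (c y z)) \<and>
     (\<forall>x\<in>A. c x x = x) \<and>
     (\<forall>x\<in>A. \<forall>y\<in>A. \<forall>z\<in>A. c (c x y) z = c (c y x) z) \<and>
     (\<forall>x\<in>A. \<forall>y\<in>A. \<forall>z\<in>A. i (i x y) z = i x (i y z)) \<and>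
     (\<forall>x\<in>A. \<forall>y\<in>A. i x y = i y x) \<and>
     (\<forall>x\<in>A. i x x = x) \<and>
     (\<forall>x\<in>A. \<forall>y\<in>A. c (i x y) x = i x y) \<and>
     (\<forall>x\<in>A. \<forall>y\<in>A. \<forall>z\<in>A. c x (i y z) = i (c x y) z) \<and>
     (\<forall>s\<in>A. \<forall>t\<in>A. c s (ov s t) = s) \<and>
     (\<forall>s\<in>A. \<forall>t\<in>A. ov (i (ov s t) t) s = ov s t) \<and>
     (\<forall>s\<in>A. \<forall>t\<in>A. \<forall>u\<in>A. c (ov s t) u = ov (c s u) (c t u))"

definition rnb_le :: "('a \<Rightarrow> 'a \<Rightarrow> 'a) \<Rightarrow> 'a \<Rightarrow> 'a \<Rightarrow> bool" where
  "rnb_le c f g \<longleftrightarrow> c g f = f"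

definition rnb_filter :: "'a set \<Rightarrow> ('a \<Rightarrow> 'a \<Rightarrow> 'a) \<Rightarrow> 'a set \<Rightarrow> bool" where
  "rnb_filter A c F \<longleftrightarrow> F \<noteq> {} \<and> F \<subseteq> A \<and>
     (\<forall>a\<in>F. \<forall>b\<in>F. c a b \<in> F) \<and>
     (\<forall>a\<in>F. \<forall>b\<in>A. rnb_le c a b \<longrightarrow> b \<in> F)"

definition diamond :: "('a \<Rightarrow> 'a \<Rightarrow> 'a) \<Rightarrow> ('a \<Rightarrow> 'a \<Rightarrow> 'a) \<Rightarrow> 'a \<Rightarrow> 'a \<Rightarrow> 'a" where
  "diamond c ov a b = c a (ov b a)"

end

theory Submission
  imports Defs
begin

text \<open>Split \<open>a\<close> as the override \<open>((b \<sqcup> a) \<inter> a) \<sqcup> (b \<circ> a)\<close>. Primeness of \<open>F\<close> puts one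
  of the two parts into \<open>F\<close>: if it is \<open>b \<circ> a\<close>, then \<open>b\<close> lies above it and hence in \<open>F\<close>;
  if it is \<open>(b \<sqcup> a) \<inter> a\<close>, then composing with \<open>a \<in> F\<close> gives \<open>a \<inter> (a \<diamond> b) \<in> F\<close>.\<close>

locale rnb_io_algebra =
  fixes A :: "'a set" and c i ov :: "'a \<Rightarrow> 'a \<Rightarrow> 'a"
  assumes rnb_io: "rnb_io A c i ov"
begin

lemma c_closed [simp]: "x \<in> A \<Longrightarrow> y \<in> A \<Longrightarrow> c x y \<in> A"
  and i_closed [simp]: "x \<in> A \<Longrightarrow> y \<in> A \<Longrightarrow> i x y \<in> A"
  and ov_closed [simp]: "x \<in> A \<Longrightarrow> y \<in> A \<Longrightarrow> ov x y \<in> A"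
  using rnb_io unfolding rnb_io_def by auto

lemma c_assoc: "x \<in> A \<Longrightarrow> y \<in> A \<Longrightarrow> z \<in> A \<Longrightarrow> c (c x y) z = c x (c y z)"
  and c_idem: "x \<in> A \<Longrightarrow> c x x = x"
  and i_commute: "x \<in> A \<Longrightarrow> y \<in> A \<Longrightarrow> i x y = i y x"
  and i_idem: "x \<in> A \<Longrightarrow> i x x = x"
  and c_i_absorb: "x \<in> A \<Longrightarrow> y \<in> A \<Longrightarrow> c (i x y) x = i x y"
  and c_i_assoc: "x \<in> A \<Longrightarrow> y \<in> A \<Longrightarrow> z \<in> A \<Longrightarrow> c x (i y z) = i (c x y) z"
  and c_ov_cancel: "s \<in> A \<Longrightarrow> t \<in> A \<Longrightarrow> c s (ov s t) = s"
  and ov_i_ov: "s \<in> A \<Longrightarrow> t \<in> A \<Longrightarrow> ov (i (ov s t) t) s = ov s t"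
  and c_ov_distrib: "s \<in> A \<Longrightarrow> t \<in> A \<Longrightarrow> u \<in> A \<Longrightarrow> c (ov s t) u = ov (c s u) (c t u)"
  using rnb_io unfolding rnb_io_def by auto

lemma c_c_self: "x \<in> A \<Longrightarrow> y \<in> A \<Longrightarrow> c x (c x y) = c x y"
  by (simp flip: c_assoc add: c_idem)

lemma i_c_right: "x \<in> A \<Longrightarrow> y \<in> A \<Longrightarrow> i (c x y) y = c x y"
  by (simp flip: c_i_assoc add: i_idem)

lemma c_eq_imp_i_eq:
  assumes "x \<in> A" "y \<in> A" "c x y = x"
  shows "i x y = x"
  using i_c_right[OF assms(1,2)] assms(3) by simp

lemma i_eq_imp_c_eq:
  assumes "x \<in> A" "y \<in> A" "i x y = x"
  shows "c y x = x"
proof -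
  have "c y x = c y (i y x)"
    using assms by (simp add: i_commute)
  also have "\<dots> = i y x"
    using assms by (simp add: c_i_assoc c_idem)
  finally show ?thesis
    using assms by (simp add: i_commute)
qed

lemma c_ov_left_self:
  assumes "a \<in> A" "x \<in> A"
  shows "c (ov a x) a = a"
  using assms by (simp add: i_eq_imp_c_eq c_eq_imp_i_eq c_ov_cancel)

lemma ov_c_right_absorb:
  assumes "a \<in> A" "x \<in> A"
  shows "ov a (c x a) = a"
  using c_ov_left_self[OF assms] c_ov_distrib[OF assms(1,2,1)] assms by (simp add: c_idem)

lemma ov_c_left_absorb:
  assumes "x \<in> A" "a \<in> A"
  shows "ov (c x a) a = a"
proof -
  have "i a (c x a) = c x a"
    using i_commute[of a "c x a"] i_c_right[of x a] assms by simp
  then show ?thesis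
    using ov_i_ov[of a "c x a"] assms by (simp add: ov_c_right_absorb)
qed

lemma c_ov_right_self:
  assumes "x \<in> A" "a \<in> A"
  shows "c (ov x a) a = a"
  using assms by (simp add: c_ov_distrib c_idem ov_c_left_absorb)

lemma ov_i_ov_c_self:
  assumes "a \<in> A" "b \<in> A"
  shows "ov (i (ov b a) a) (c b a) = a"
proof -
  have "c (i (ov b a) a) a = i (ov b a) a"
    using assms by (simp add: i_commute c_i_absorb)
  then have "ov (i (ov b a) a) (c b a) = c (ov (i (ov b a) a) b) a"
    using assms by (simp add: c_ov_distrib)
  also have "\<dots> = a"
    using assms by (simp add: ov_i_ov c_ov_right_self)
  finally show ?thesis .
qed

lemma c_i_ov_eq_i_diamond:
  assumes "a \<in> A" "b \<in> A"
  shows "c a (i (ov b a) a) = i a (diamond c ov a b)"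
  using c_i_assoc[of a "ov b a" a] i_commute[of "c a (ov b a)" a] assms
  by (simp add: diamond_def)

end

lemma rnb_filter_subset: "rnb_filter A c F \<Longrightarrow> F \<subseteq> A"
  and rnb_filter_c_closed: "rnb_filter A c F \<Longrightarrow> x \<in> F \<Longrightarrow> y \<in> F \<Longrightarrow> c x y \<in> F"
  and rnb_filter_upward: "rnb_filter A c F \<Longrightarrow> x \<in> F \<Longrightarrow> y \<in> A \<Longrightarrow> c y x = x \<Longrightarrow> y \<in> F"
  unfolding rnb_filter_def rnb_le_def by auto

theorem proposition3p18:
  assumes "rnb_io A c i ov"
    and "rnb_filter A c F"
    and prime: "\<forall>a\<in>A. \<forall>b\<in>A. ov a b \<in> F \<longrightarrow> a \<in> F \<or> b \<in> F"
    and "a \<in> F" and "b \<in> A"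
  shows "b \<in> F \<or> i a (diamond c ov a b) \<in> F"
proof -
  interpret rnb_io_algebra A c i ov by standard fact
  have "a \<in> A"
    using rnb_filter_subset[OF assms(2)] \<open>a \<in> F\<close> by blast
  then have "ov (i (ov b a) a) (c b a) \<in> F"
    using ov_i_ov_c_self[of a b] \<open>a \<in> F\<close> \<open>b \<in> A\<close> by simp
  then have "i (ov b a) a \<in> F \<or> c b a \<in> F"
    using prime \<open>a \<in> A\<close> \<open>b \<in> A\<close> by simp
  then show ?thesis
  proof
    assume "i (ov b a) a \<in> F"
    then have "c a (i (ov b a) a) \<in> F"
      by (rule rnb_filter_c_closed[OF assms(2) \<open>a \<in> F\<close>])
    then show ?thesis
      unfolding c_i_ov_eq_i_diamond[OF \<open>a \<in> A\<close> \<open>b \<in> A\<close>] by (rule disjI2)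
  next
    assume "c b a \<in> F"
    then have "b \<in> F"
      by (rule rnb_filter_upward[OF assms(2) _ \<open>b \<in> A\<close> c_c_self[OF \<open>b \<in> A\<close> \<open>a \<in> A\<close>]])
    then show ?thesis ..
  qed
qed

end
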